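(* Let $A\in\{\mathbb Z,\mathbb R\}$ and let $K,X\subset\mathbb R^d$ be $d$-dimensional convex bodies with $\mathrm{width}(K)=\mathrm{Flt}_d^A(X)$. Then $K$ contains an $A$-unimodular copy of $X$.
   Context: A convex body is a nonempty compact convex subset of $\mathbb R^d$. An $A$-unimodular transformation is a map $T(x)=Mx+b$ with $M\in \mathrm{GL}_d(\mathbb Z)$ and $b\in A^d$; an $A$-unimodular copy of $X$ is $T(X)$ for such a $T$. For $u\in(\mathbb Z^d)^*$, $\mathrm{width}_u(K)=\sup_{x,y\in K}|u(x)-u(y)|$ and $\mathrm{width}(K)=\inf_{u\in(\mathbb Z^d)^*\setminus\{0\}}\mathrm{width}_u(K)$. $\mathrm{Flt}_d^A(X)=\sup\{\mathrm{width}(K'): K'\subset\mathbb R^d \text{ a convex body containing no } A\text{-unimodular copy of } X\}$. *)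

theory Defs
  imports "HOL-Analysis.Analysis"
begin

definition convex_body :: "(real^'n) set \<Rightarrow> bool" where
  "convex_body K \<longleftrightarrow> K \<noteq> {} \<and> compact K \<and> convex K"

definition int_vec :: "real^'n \<Rightarrow> bool" where
  "int_vec u \<longleftrightarrow> (\<forall>i. u $ i \<in> \<int>)"

definition int_mat :: "real^'n^'n \<Rightarrow> bool" where
  "int_mat M \<longleftrightarrow> (\<forall>i j. M $ i $ j \<in> \<int>)"

definition GL_Z :: "(real^'n^'n) set" where
  "GL_Z = {M. int_mat M \<and> invertible M \<and> int_mat (matrix_inv M)}"

definition contains_copy :: "real set \<Rightarrow> (real^'n) set \<Rightarrow> (real^'n) set \<Rightarrow> bool" where
  "contains_copy A K X \<longleftrightarrow>
     (\<exists>M b. M \<in> GL_Z \<and> (\<forall>i. b $ i \<in> A) \<and> (\<lambda>x. M *v x + b) ` X \<subseteq> K)"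

text \<open>Functionals in (Z^d)^* are represented as x \<mapsto> u \<bullet> x with u integer.\<close>
definition width_dir :: "real^'n \<Rightarrow> (real^'n) set \<Rightarrow> real" where
  "width_dir u K = Sup {\<bar>u \<bullet> x - u \<bullet> y\<bar> | x y. x \<in> K \<and> y \<in> K}"

definition lattice_width :: "(real^'n) set \<Rightarrow> real" where
  "lattice_width K = Inf {width_dir u K | u. int_vec u \<and> u \<noteq> 0}"

definition Flt :: "real set \<Rightarrow> (real^'n) set \<Rightarrow> ereal" where
  "Flt A X = Sup {ereal (lattice_width K') | K'. convex_body K' \<and> \<not> contains_copy A K' X}"

end

theory Submission
  imports Defs
begin

text \<open>
  Thickening K by r raises its lattice width by at least 2r, because every nonzero integer
  direction has norm at least 1. So every thickening of K has lattice width above Flt and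
  contains a copy of X. As X contains a ball and K is bounded, the affine maps producing these
  copies range over a bounded set; integer matrices form a discrete, hence closed, set and A is
  closed. The admissible maps therefore form a nested sequence of nonempty compact sets, and a
  map in their intersection carries X into the intersection of the thickenings, which is K.
\<close>

definition thickening :: "real \<Rightarrow> 'a::real_normed_vector set \<Rightarrow> 'a set" where
  "thickening r K = {x + y | x y. x \<in> K \<and> y \<in> cball 0 r}"

lemma subset_thickening: "r \<ge> 0 \<Longrightarrow> K \<subseteq> thickening r K"
  unfolding thickening_def by force

lemma thickening_mono: "r \<le> s \<Longrightarrow> thickening r K \<subseteq> thickening s K"
  unfolding thickening_def by fastforce

lemma compact_thickening:
  fixes K :: "'a::euclidean_space set"
  shows "compact K \<Longrightarrow> compact (thickening r K)"
  unfolding thickening_def by (rule compact_sums) auto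

lemma convex_thickening:
  assumes "convex K"
  shows "convex (thickening r K)"
proof -
  have "thickening r K = (\<Union>x\<in>K. \<Union>y\<in>cball 0 r. {x + y})"
    unfolding thickening_def by blast
  then show ?thesis using assms by (simp add: convex_sums)
qed

lemma convex_body_thickening:
  assumes "convex_body K" "r \<ge> 0"
  shows "convex_body (thickening r K)"
proof -
  have "K \<subseteq> thickening r K" using assms(2) by (rule subset_thickening)
  with assms(1) show ?thesis
    unfolding convex_body_def by (auto simp: compact_thickening convex_thickening)
qed

lemma Inter_thickening_closed:
  assumes "closed K"
  shows "(\<Inter>n. thickening (1 / real (Suc n)) K) = K"
proof
  show "(\<Inter>n. thickening (1 / real (Suc n)) K) \<subseteq> K"
  proof
    fix p assume p: "p \<in> (\<Inter>n. thickening (1 / real (Suc n)) K)"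
    have "\<exists>y\<in>K. dist y p < e" if "e > 0" for e
    proof -
      obtain n where n: "1 / real (Suc n) < e" using nat_approx_posE[OF \<open>e > 0\<close>] .
      have "p \<in> thickening (1 / real (Suc n)) K" using p by blast
      then obtain x y where "p = x + y" "x \<in> K" "norm y \<le> 1 / real (Suc n)"
        unfolding thickening_def by auto
      then have "dist x p < e" using n by (simp add: dist_norm)
      with \<open>x \<in> K\<close> show ?thesis by blast
    qed
    then show "p \<in> K" using closed_approachable[OF assms] by blast
  qed
  show "K \<subseteq> (\<Inter>n. thickening (1 / real (Suc n)) K)"
    by (intro INT_greatest subset_thickening) simp
qed

lemma bdd_above_width_dir:
  assumes "bounded K"
  shows "bdd_above {\<bar>u \<bullet> x - u \<bullet> y\<bar> | x y. x \<in> K \<and> y \<in> K}"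
proof -
  obtain B where B: "\<And>x. x \<in> K \<Longrightarrow> norm x \<le> B"
    using assms bounded_iff by blast
  have "\<bar>u \<bullet> x - u \<bullet> y\<bar> \<le> norm u * (B + B)" if "x \<in> K" "y \<in> K" for x y
  proof -
    have "\<bar>u \<bullet> x - u \<bullet> y\<bar> \<le> norm u * norm (x - y)"
      by (metis Cauchy_Schwarz_ineq2 inner_diff_right)
    also have "\<dots> \<le> norm u * (B + B)"
      using B[OF that(1)] B[OF that(2)] norm_triangle_ineq4[of x y]
      by (intro mult_left_mono) auto
    finally show ?thesis .
  qed
  then show ?thesis unfolding bdd_above_def by blast
qed

lemma width_dir_nonneg:
  assumes "K \<noteq> {}" "bounded K"
  shows "0 \<le> width_dir u K"
proof -
  obtain x where "x \<in> K" using assms(1) by blast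
  then have "\<bar>u \<bullet> x - u \<bullet> x\<bar> \<le> width_dir u K"
    unfolding width_dir_def by (intro cSup_upper bdd_above_width_dir assms(2)) blast
  then show ?thesis by simp
qed

lemma lattice_width_le_width_dir:
  assumes "K \<noteq> {}" "bounded K" "int_vec u" "u \<noteq> 0"
  shows "lattice_width K \<le> width_dir u K"
  unfolding lattice_width_def using assms width_dir_nonneg[OF assms(1,2)]
  by (intro cInf_lower) (auto simp: bdd_below_def)

lemma norm_int_vec_ge_1:
  assumes "int_vec u" "u \<noteq> 0"
  shows "1 \<le> norm u"
proof -
  obtain i where "u $ i \<noteq> 0" using assms(2) by (metis vec_eq_iff zero_index)
  moreover have "u $ i \<in> \<int>" using assms(1) unfolding int_vec_def by auto
  ultimately have "1 \<le> \<bar>u $ i\<bar>" by (metis Ints_nonzero_abs_ge1)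
  then show ?thesis using component_le_norm_cart[of u i] by linarith
qed

lemma width_dir_thickening:
  assumes "K \<noteq> {}" "compact K" "r \<ge> 0" "1 \<le> norm u"
  shows "width_dir u K + 2 * r \<le> width_dir u (thickening r K)"
proof -
  define v where "v = (r / norm u) *\<^sub>R u"
  have "u \<bullet> v = r * norm u" "norm v = r"
    unfolding v_def using assms by (auto simp: dot_square_norm power2_eq_square)
  then have uv: "r \<le> u \<bullet> v" and v: "v \<in> cball 0 r" "- v \<in> cball 0 r"
    using assms by (auto simp: mult_le_cancel_left1)
  have "u \<bullet> x - u \<bullet> y + 2 * r \<le> width_dir u (thickening r K)" if "x \<in> K" "y \<in> K" for x y
  proof -
    have "x + v \<in> thickening r K" "y + - v \<in> thickening r K"
      unfolding thickening_def using that v by blast+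
    then have "\<bar>u \<bullet> (x + v) - u \<bullet> (y + - v)\<bar> \<le> width_dir u (thickening r K)"
      unfolding width_dir_def
      by (intro cSup_upper bdd_above_width_dir compact_imp_bounded compact_thickening assms(2)) blast
    moreover have "u \<bullet> (x + v) - u \<bullet> (y + - v) = u \<bullet> x - u \<bullet> y + 2 * (u \<bullet> v)"
      by (simp add: inner_add_right inner_diff_right)
    ultimately show ?thesis using uv by linarith
  qed
  then have bound: "\<bar>u \<bullet> x - u \<bullet> y\<bar> \<le> width_dir u (thickening r K) - 2 * r"
    if "x \<in> K" "y \<in> K" for x y
    using that by (metis abs_le_iff add.commute le_diff_eq minus_diff_eq)
  have "width_dir u K \<le> width_dir u (thickening r K) - 2 * r"
    unfolding width_dir_def[of u K] using assms(1) bound by (intro cSup_least) blast+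
  then show ?thesis by simp
qed

lemma lattice_width_thickening:
  fixes K :: "(real^'n) set"
  assumes "K \<noteq> {}" "compact K" "r \<ge> 0"
  shows "lattice_width K + 2 * r \<le> lattice_width (thickening r K)"
  unfolding lattice_width_def[of "thickening r K"]
proof (rule cInf_greatest)
  have "int_vec (axis i 1 :: real^'n)" "axis i 1 \<noteq> (0::real^'n)" for i
    unfolding int_vec_def axis_def by (auto simp: vec_eq_iff)
  then show "{width_dir u (thickening r K) |u. int_vec u \<and> u \<noteq> (0::real^'n)} \<noteq> {}"
    by blast
next
  fix w assume "w \<in> {width_dir u (thickening r K) |u. int_vec u \<and> u \<noteq> (0::real^'n)}"
  then obtain u where u: "int_vec u" "u \<noteq> 0" and w: "w = width_dir u (thickening r K)" by auto
  have "lattice_width K \<le> width_dir u K"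
    using lattice_width_le_width_dir[OF assms(1) compact_imp_bounded[OF assms(2)] u] .
  moreover have "width_dir u K + 2 * r \<le> w"
    unfolding w by (rule width_dir_thickening[OF assms norm_int_vec_ge_1[OF u]])
  ultimately show "lattice_width K + 2 * r \<le> w" by linarith
qed

lemma contains_copy_if_Flt_less_lattice_width:
  assumes "convex_body K" "Flt A X < ereal (lattice_width K)"
  shows "contains_copy A K X"
proof (rule ccontr)
  assume "\<not> contains_copy A K X"
  with assms(1) have "ereal (lattice_width K) \<le> Flt A X"
    unfolding Flt_def by (intro Sup_upper) blast
  with assms(2) show False by simp
qed

definition copy_maps ::
    "real set \<Rightarrow> (real^'n) set \<Rightarrow> (real^'n) set \<Rightarrow> ((real^'n^'n) \<times> (real^'n)) set" where
  "copy_maps A K X = {(M, b). M \<in> GL_Z \<and> (\<forall>i. b $ i \<in> A) \<and> (\<lambda>x. M *v x + b) ` X \<subseteq> K}"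

lemma contains_copy_iff_copy_maps_nonempty:
  "contains_copy A K X \<longleftrightarrow> copy_maps A K X \<noteq> {}"
  unfolding contains_copy_def copy_maps_def by auto

lemma copy_maps_mono: "K \<subseteq> L \<Longrightarrow> copy_maps A K X \<subseteq> copy_maps A L X"
  unfolding copy_maps_def by auto

lemma closed_int_mat_set:
  assumes "\<And>M. M \<in> S \<Longrightarrow> int_mat M"
  shows "closed S"
proof (rule discrete_imp_closed[OF zero_less_one], intro ballI impI)
  fix M N assume MN: "M \<in> S" "N \<in> S" "dist N M < 1"
  have "N $ i $ j = M $ i $ j" for i j
  proof -
    have "\<bar>N $ i $ j - M $ i $ j\<bar> \<le> dist N M"
      using component_le_norm_cart[of "(N - M) $ i" j]
        Finite_Cartesian_Product.norm_nth_le[of "N - M" i]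
      by (simp add: dist_norm)
    moreover have "N $ i $ j \<in> \<int>" "M $ i $ j \<in> \<int>"
      using assms MN(1,2) unfolding int_mat_def by auto
    ultimately show ?thesis using MN(3) Ints_eq_abs_less1 by fastforce
  qed
  then show "N = M" by (simp add: vec_eq_iff)
qed

lemma closed_GL_Z: "closed GL_Z"
  by (rule closed_int_mat_set) (simp add: GL_Z_def)

lemma closed_copy_maps:
  fixes K X :: "(real^'n) set"
  assumes "closed A" "closed K"
  shows "closed (copy_maps A K X)"
proof -
  have closed_coord: "closed ((\<lambda>b. b $ i) -` A)" for i :: 'n
    by (intro continuous_closed_vimage assms(1) linear_continuous_at bounded_linear_vec_nth)
  have closed_eval: "closed ((\<lambda>p. fst p *v x + snd p) -` K)" for x :: "real^'n"
  proof -
    have "linear (\<lambda>p :: (real^'n^'n) \<times> (real^'n). fst p *v x + snd p)"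
      by (intro linearI)
        (auto simp: matrix_vector_mult_add_rdistrib scaleR_matrix_vector_assoc scaleR_add_right)
    then show ?thesis
      by (intro continuous_closed_vimage assms(2) linear_continuous_at)
        (simp add: linear_conv_bounded_linear)
  qed
  have "copy_maps A K X =
      (GL_Z \<times> (\<Inter>i. (\<lambda>b. b $ i) -` A)) \<inter> (\<Inter>x\<in>X. (\<lambda>p. fst p *v x + snd p) -` K)"
    unfolding copy_maps_def by auto
  then show ?thesis
    by (simp only:)
      (intro closed_Int closed_Times closed_GL_Z closed_INT ballI closed_coord closed_eval)
qed

lemma norm_le_matrix_component:
  fixes M :: "real^'n^'m"
  assumes "\<And>i j. \<bar>M $ i $ j\<bar> \<le> B"
  shows "norm M \<le> real CARD('m) * real CARD('n) * B"
proof -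
  have "norm M \<le> (\<Sum>i\<in>UNIV. norm (M $ i))"
    by (simp add: norm_vec_def L2_set_le_sum)
  also have "\<dots> \<le> (\<Sum>i\<in>UNIV. \<Sum>j\<in>UNIV. \<bar>M $ i $ j\<bar>)"
    by (intro sum_mono norm_le_l1_cart)
  also have "\<dots> \<le> (\<Sum>i\<in>(UNIV::'m set). \<Sum>j\<in>(UNIV::'n set). B)"
    by (intro sum_mono assms)
  finally show ?thesis by simp
qed

lemma bounded_affine_maps_ball_into:
  fixes S :: "(real^'m) set" and c :: "real^'n"
  assumes "bounded S" "e > 0"
  shows "bounded {(M, b). (\<lambda>x. M *v x + b) ` cball c e \<subseteq> S}"
proof -
  obtain R where R: "\<And>y. y \<in> S \<Longrightarrow> norm y \<le> R"
    using assms(1) bounded_iff by blast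
  define D where "D = real CARD('m) * real CARD('n) * (2 * R / e)"
  have "norm (M, b) \<le> D + (R + D * norm c)"
    if maps: "(\<lambda>x. M *v x + b) ` cball c e \<subseteq> S" for M b
  proof -
    have "c \<in> cball c e" using assms(2) by simp
    then have center: "norm (M *v c + b) \<le> R" using maps R by blast
    have entry: "\<bar>M $ i $ j\<bar> \<le> 2 * R / e" for i j
    proof -
      have "c + e *\<^sub>R axis j 1 \<in> cball c e"
        using assms(2) by (simp add: dist_norm)
      then have moved: "norm (M *v (c + e *\<^sub>R axis j 1) + b) \<le> R"
        using maps R by blast
      have "\<bar>M $ i $ j\<bar> \<le> norm (column j M)"
        using component_le_norm_cart[of "column j M" i] by (simp add: column_def)
      then have "e * \<bar>M $ i $ j\<bar> \<le> norm (e *\<^sub>R column j M)"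
        using assms(2) by simp
      also have "e *\<^sub>R column j M = (M *v (c + e *\<^sub>R axis j 1) + b) - (M *v c + b)"
        by (simp add: matrix_vector_right_distrib matrix_vector_mult_scaleR matrix_vector_mult_basis)
      also have "norm \<dots> \<le> 2 * R"
        using norm_triangle_ineq4[of "M *v (c + e *\<^sub>R axis j 1) + b" "M *v c + b"] moved center
        by linarith
      finally show ?thesis
        using assms(2) by (simp add: pos_le_divide_eq mult.commute)
    qed
    have normM: "norm M \<le> D"
      unfolding D_def by (rule norm_le_matrix_component[OF entry])
    have "onorm ((*v) M) \<le> D"
      unfolding D_def by (rule onorm_le_matrix_component[OF entry])
    then have "norm (M *v c) \<le> D * norm c"
      by (meson matrix_vector_mul_bounded_linear mult_right_mono norm_ge_zero onorm order_trans)
    with center have "norm b \<le> R + D * norm c"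
      using norm_triangle_ineq4[of "M *v c + b" "M *v c"] by simp
    with normM show ?thesis using norm_Pair_le[of M b] by linarith
  qed
  then show ?thesis unfolding bounded_iff by blast
qed

lemma contains_copy_from_thickenings:
  fixes K X :: "(real^'n) set"
  assumes "closed A" "compact K" "e > 0" "cball c e \<subseteq> X"
    and copies: "\<And>r. r > 0 \<Longrightarrow> contains_copy A (thickening r K) X"
  shows "contains_copy A K X"
proof -
  define F where "F n = copy_maps A (thickening (1 / real (Suc n)) K) X" for n
  have "F n \<subseteq> copy_maps A (thickening 1 K) X" for n
    unfolding F_def by (intro copy_maps_mono thickening_mono) simp
  also have "\<dots> \<subseteq> {(M, b). (\<lambda>x. M *v x + b) ` cball c e \<subseteq> thickening 1 K}"
    using assms(4) unfolding copy_maps_def by (auto intro: order.trans[OF image_mono])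
  finally have F_subset:
    "F n \<subseteq> {(M, b). (\<lambda>x. M *v x + b) ` cball c e \<subseteq> thickening 1 K}" for n .
  have "bounded {(M, b). (\<lambda>x. M *v x + b) ` cball c e \<subseteq> thickening 1 K}"
    by (intro bounded_affine_maps_ball_into compact_imp_bounded compact_thickening assms(2,3))
  then have "bounded (F n)" for n using F_subset by (rule bounded_subset)
  moreover have "closed (F n)" for n
    unfolding F_def
    by (intro closed_copy_maps assms(1) compact_imp_closed compact_thickening assms(2))
  ultimately have "compact (F n)" for n by (simp add: compact_eq_bounded_closed)
  moreover have "F n \<noteq> {}" for n
    unfolding F_def contains_copy_iff_copy_maps_nonempty[symmetric] by (simp add: copies)
  moreover have "F n \<subseteq> F m" if "m \<le> n" for m n
    unfolding F_def using that by (intro copy_maps_mono thickening_mono) (simp add: frac_le)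
  ultimately have "\<Inter>(range F) \<noteq> {}" by (rule compact_nest)
  then obtain M b where "\<forall>n. (M, b) \<in> F n" by auto
  then have "(M, b) \<in> copy_maps A (\<Inter>n. thickening (1 / real (Suc n)) K) X"
    unfolding F_def copy_maps_def by blast
  then show ?thesis
    unfolding contains_copy_iff_copy_maps_nonempty
      Inter_thickening_closed[OF compact_imp_closed[OF assms(2)]] by blast
qed

theorem proposition2p9:
  fixes A :: "real set" and K X :: "(real^'n) set"
  assumes "A = \<int> \<or> A = UNIV"
    and "convex_body K" and "interior K \<noteq> {}"
    and "convex_body X" and "interior X \<noteq> {}"
    and "ereal (lattice_width K) = Flt A X"
  shows "contains_copy A K X"
proof -
  have K: "K \<noteq> {}" "compact K" using assms(2) unfolding convex_body_def by auto
  obtain c where "c \<in> interior X" using assms(5) by blast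
  then obtain e where e: "e > 0" "cball c e \<subseteq> X"
    using open_interior open_contains_cball interior_subset by (metis subset_trans)
  have "closed A" using assms(1) by auto
  moreover have "contains_copy A (thickening r K) X" if "r > 0" for r
  proof (rule contains_copy_if_Flt_less_lattice_width)
    show "convex_body (thickening r K)"
      using assms(2) that by (simp add: convex_body_thickening)
    have "lattice_width K < lattice_width (thickening r K)"
      using lattice_width_thickening[OF K, of r] that by linarith
    then show "Flt A X < ereal (lattice_width (thickening r K))"
      unfolding assms(6)[symmetric] by simp
  qed
  ultimately show ?thesis
    using contains_copy_from_thickenings[OF _ K(2) e] by blast
qed

end
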